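(* Let $\mathcal{G}$ be a finite connected undirected simple graph with $N$ nodes which is not a tree, with degrees $d_1,\dots,d_N$, leading non-backtracking eigenvalue $\kappa>0$ and non-backtracking centralities $x_1,\dots,x_N$. Then the stationary distribution $\pi^{\mathrm B}=(\pi^{\mathrm B}_1,\dots,\pi^{\mathrm B}_N)$ of the NBCRW on $\mathcal{G}$ is $$\pi_i^{\mathrm B}=\left(\frac{\kappa^2-1}{\kappa}+\frac{d_i}{\kappa}\right)\frac{x_i^2}{Q},\qquad Q=\sum_{i=1}^N\left(\frac{\kappa^2-1}{\kappa}+\frac{d_i}{\kappa}\right)x_i^2 .$$
   Context: The non-backtracking matrix $\mathbf{B}$ of $\mathcal{G}$ is the $2E\times 2E$ matrix indexed by directed edges $i\to j$ (each undirected edge gives two directed edges), with $B_{i\to j,\,k\to l}=1$ if $j=k$ and $i\neq l$, and $0$ otherwise; $\kappa$ is its leading (Perron–Frobenius) eigenvalue and $v=(v_{i\to j})$ a corresponding eigenvector with non-negative entries. The non-backtracking centrality of node $i$ is $x_i=\sum_{j\in\mathcal{N}_i}v_{i\to j}$. The NBCRW on $\mathcal{G}$ (adjacency matrix $(a_{ij})$) is the Markov chain on the nodes with $p_{ij}=\dfrac{a_{ij}x_j}{\sum_{k}a_{ik}x_k}$ (assumed defined). A stationary distribution is a probability vector $\pi$ with $\pi\mathbf{P}=\pi$. *)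

theory Defs
  imports Complex_Main
begin

definition simple_graph :: "'a set \<Rightarrow> ('a \<Rightarrow> 'a \<Rightarrow> bool) \<Rightarrow> bool" where
  "simple_graph V E \<longleftrightarrow> finite V \<and> (\<forall>i j. E i j \<longrightarrow> i \<in> V \<and> j \<in> V)
     \<and> (\<forall>i j. E i j \<longrightarrow> E j i) \<and> (\<forall>i. \<not> E i i)"

definition connected_graph :: "'a set \<Rightarrow> ('a \<Rightarrow> 'a \<Rightarrow> bool) \<Rightarrow> bool" where
  "connected_graph V E \<longleftrightarrow> V \<noteq> {} \<and> (\<forall>i\<in>V. \<forall>j\<in>V. E\<^sup>*\<^sup>* i j)"

definition is_cycle :: "('a \<Rightarrow> 'a \<Rightarrow> bool) \<Rightarrow> 'a list \<Rightarrow> bool" where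
  "is_cycle E cs \<longleftrightarrow> length cs \<ge> 3 \<and> distinct cs
     \<and> (\<forall>k. Suc k < length cs \<longrightarrow> E (cs ! k) (cs ! Suc k))
     \<and> E (last cs) (hd cs)"

definition is_tree :: "'a set \<Rightarrow> ('a \<Rightarrow> 'a \<Rightarrow> bool) \<Rightarrow> bool" where
  "is_tree V E \<longleftrightarrow> connected_graph V E \<and> \<not> (\<exists>cs. is_cycle E cs)"

definition degree :: "'a set \<Rightarrow> ('a \<Rightarrow> 'a \<Rightarrow> bool) \<Rightarrow> 'a \<Rightarrow> nat" where
  "degree V E i = card {j\<in>V. E i j}"

definition dir_edges :: "'a set \<Rightarrow> ('a \<Rightarrow> 'a \<Rightarrow> bool) \<Rightarrow> ('a \<times> 'a) set" where
  "dir_edges V E = {(i, j). i \<in> V \<and> j \<in> V \<and> E i j}"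

definition nb_matrix :: "('a \<times> 'a) \<Rightarrow> ('a \<times> 'a) \<Rightarrow> real" where
  "nb_matrix e f = (if snd e = fst f \<and> fst e \<noteq> snd f then 1 else 0)"

definition nb_eigenvalue :: "'a set \<Rightarrow> ('a \<Rightarrow> 'a \<Rightarrow> bool) \<Rightarrow> complex \<Rightarrow> bool" where
  "nb_eigenvalue V E l \<longleftrightarrow> (\<exists>w :: 'a \<times> 'a \<Rightarrow> complex.
      (\<exists>e\<in>dir_edges V E. w e \<noteq> 0) \<and>
      (\<forall>e\<in>dir_edges V E. (\<Sum>f\<in>dir_edges V E. of_real (nb_matrix e f) * w f) = l * w e))"

definition nb_leading_eigenvalue :: "'a set \<Rightarrow> ('a \<Rightarrow> 'a \<Rightarrow> bool) \<Rightarrow> real \<Rightarrow> bool" where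
  "nb_leading_eigenvalue V E \<kappa> \<longleftrightarrow> nb_eigenvalue V E (of_real \<kappa>)
     \<and> (\<forall>l. nb_eigenvalue V E l \<longrightarrow> cmod l \<le> \<kappa>)"

definition nb_nonneg_eigenvector :: "'a set \<Rightarrow> ('a \<Rightarrow> 'a \<Rightarrow> bool) \<Rightarrow> real \<Rightarrow> ('a \<times> 'a \<Rightarrow> real) \<Rightarrow> bool" where
  "nb_nonneg_eigenvector V E \<kappa> v \<longleftrightarrow>
     (\<forall>e\<in>dir_edges V E. v e \<ge> 0) \<and> (\<exists>e\<in>dir_edges V E. v e \<noteq> 0) \<and>
     (\<forall>e\<in>dir_edges V E. (\<Sum>f\<in>dir_edges V E. nb_matrix e f * v f) = \<kappa> * v e)"

definition nb_centrality :: "'a set \<Rightarrow> ('a \<Rightarrow> 'a \<Rightarrow> bool) \<Rightarrow> ('a \<times> 'a \<Rightarrow> real) \<Rightarrow> 'a \<Rightarrow> real" where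
  "nb_centrality V E v i = (\<Sum>j\<in>{j\<in>V. E i j}. v (i, j))"

definition nbcrw :: "'a set \<Rightarrow> ('a \<Rightarrow> 'a \<Rightarrow> bool) \<Rightarrow> ('a \<Rightarrow> real) \<Rightarrow> 'a \<Rightarrow> 'a \<Rightarrow> real" where
  "nbcrw V E x i j = (if E i j then x j else 0) / (\<Sum>k\<in>{k\<in>V. E i k}. x k)"

definition stationary_distribution :: "'a set \<Rightarrow> ('a \<Rightarrow> 'a \<Rightarrow> real) \<Rightarrow> ('a \<Rightarrow> real) \<Rightarrow> bool" where
  "stationary_distribution V P \<pi> \<longleftrightarrow> (\<forall>i\<in>V. \<pi> i \<ge> 0) \<and> (\<Sum>i\<in>V. \<pi> i) = 1
     \<and> (\<forall>j\<in>V. (\<Sum>i\<in>V. \<pi> i * P i j) = \<pi> j)"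

end

theory Submission
  imports Defs
begin

text \<open>Eigenvector equation of the non-backtracking matrix at the edge i\<rightarrow>j reads
  \<kappa> v(i\<rightarrow>j) = x_j - v(j\<rightarrow>i). Summing it over the edges into and out of a node gives
  \<kappa> s_i = (\<kappa>^2 - 1 + d_i) x_i, where s_i is the sum of the centralities of the neighbours of i.
  Hence the claimed distribution is proportional to x_i s_i. The NBCRW is the random walk
  with symmetric edge weights x_i x_j, so x_i s_i is stationary (detailed balance), and it is the
  only stationary distribution by the maximum principle on a connected graph.\<close>

lemma simple_graph_finite: "simple_graph V E \<Longrightarrow> finite V"
  by (simp add: simple_graph_def)

lemma simple_graph_edge_in: "simple_graph V E \<Longrightarrow> E i j \<Longrightarrow> i \<in> V \<and> j \<in> V"
  by (simp add: simple_graph_def)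

lemma simple_graph_sym: "simple_graph V E \<Longrightarrow> E i j \<Longrightarrow> E j i"
  by (simp add: simple_graph_def)

lemma simple_graph_neighbours_sym: "simple_graph V E \<Longrightarrow> {i\<in>V. E i j} = {i\<in>V. E j i}"
  by (metis simple_graph_sym)

lemma finite_dir_edges: "simple_graph V E \<Longrightarrow> finite (dir_edges V E)"
  by (rule finite_subset[of _ "V \<times> V"]) (auto simp: dir_edges_def dest: simple_graph_finite)

lemma connected_graph_propagate:
  assumes "connected_graph V E" and "i \<in> V" and "P i"
    and "\<And>a b. E a b \<Longrightarrow> P a \<Longrightarrow> P b" and "j \<in> V"
  shows "P j"
proof -
  have "E\<^sup>*\<^sup>* i j" using assms(1,2,5) by (simp add: connected_graph_def)
  then show ?thesis
  proof (induction rule: rtranclp_induct)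
    case (step b c)
    then show ?case using assms(4) by blast
  qed (rule assms(3))
qed

definition neighbour_sum :: "'a set \<Rightarrow> ('a \<Rightarrow> 'a \<Rightarrow> bool) \<Rightarrow> ('a \<Rightarrow> real) \<Rightarrow> 'a \<Rightarrow> real" where
  "neighbour_sum V E x i = (\<Sum>k\<in>{k\<in>V. E i k}. x k)"

lemma nbcrw_stationary:
  assumes G: "simple_graph V E" and ne: "V \<noteq> {}"
    and x_pos: "\<forall>i\<in>V. x i > 0" and s_pos: "\<forall>i\<in>V. neighbour_sum V E x i > 0"
  defines "Q \<equiv> \<Sum>i\<in>V. x i * neighbour_sum V E x i"
  shows "stationary_distribution V (nbcrw V E x) (\<lambda>i. x i * neighbour_sum V E x i / Q)"
  unfolding stationary_distribution_def
proof (intro conjI ballI)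
  have "Q > 0"
    unfolding Q_def using ne x_pos s_pos
    by (intro sum_pos simple_graph_finite[OF G]) auto
  moreover have "x i * neighbour_sum V E x i > 0" if "i \<in> V" for i
    using that x_pos s_pos by simp
  ultimately show "x i * neighbour_sum V E x i / Q \<ge> 0" if "i \<in> V" for i
    using that by (simp add: order.strict_implies_order)
  show "(\<Sum>i\<in>V. x i * neighbour_sum V E x i / Q) = 1"
    using \<open>Q > 0\<close> by (simp add: Q_def flip: sum_divide_distrib)
next
  fix j assume "j \<in> V"
  have "(\<Sum>i\<in>V. x i * neighbour_sum V E x i / Q * nbcrw V E x i j)
      = (\<Sum>i\<in>V. if E i j then x j / Q * x i else 0)"
    using s_pos by (intro sum.cong) (auto simp: nbcrw_def neighbour_sum_def)
  also have "\<dots> = (\<Sum>i\<in>{i\<in>V. E i j}. x j / Q * x i)"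
    by (rule sum.inter_filter[OF simple_graph_finite[OF G], symmetric])
  also have "\<dots> = (\<Sum>i\<in>{i\<in>V. E j i}. x j / Q * x i)"
    by (simp add: simple_graph_neighbours_sym[OF G])
  also have "\<dots> = x j * neighbour_sum V E x j / Q"
    by (simp add: neighbour_sum_def sum_distrib_left flip: sum_divide_distrib)
  finally show "(\<Sum>i\<in>V. x i * neighbour_sum V E x i / Q * nbcrw V E x i j)
      = x j * neighbour_sum V E x j / Q" .
qed

text \<open>Maximum principle: at a maximum of h the positive weights force every neighbour to be
  a maximum too.\<close>
lemma weighted_mean_property_imp_constant:
  assumes G: "simple_graph V E" and conn: "connected_graph V E"
    and x_pos: "\<forall>i\<in>V. x i > 0"
    and mean: "\<forall>j\<in>V. h j * neighbour_sum V E x j = (\<Sum>i\<in>{i\<in>V. E j i}. h i * x i)"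
  obtains c where "\<forall>j\<in>V. h j = c"
proof -
  have fin: "finite V" using simple_graph_finite[OF G] .
  have "V \<noteq> {}" using conn by (simp add: connected_graph_def)
  then have "Max (h ` V) \<in> h ` V" using fin by (intro Max_in) auto
  then obtain m where "m \<in> V" "h m = Max (h ` V)" by (metis imageE)
  then have m: "m \<in> V" "\<forall>i\<in>V. h i \<le> h m" using fin by auto
  have max_spreads: "h b = h m" if "E a b" "h a = h m" for a b
  proof -
    have ab: "a \<in> V" "b \<in> V" using simple_graph_edge_in[OF G \<open>E a b\<close>] by auto
    have "(\<Sum>i\<in>{i\<in>V. E a i}. (h m - h i) * x i) = h m * neighbour_sum V E x a - h a * neighbour_sum V E x a"
      using mean ab(1)
      by (simp add: left_diff_distrib sum_subtractf neighbour_sum_def sum_distrib_left)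
    also have "\<dots> = 0" using that(2) by simp
    finally have "(\<Sum>i\<in>{i\<in>V. E a i}. (h m - h i) * x i) = 0" .
    moreover have "\<forall>i\<in>{i\<in>V. E a i}. (h m - h i) * x i \<ge> 0"
      using m x_pos by (fastforce intro: mult_nonneg_nonneg order.strict_implies_order)
    ultimately have "\<forall>i\<in>{i\<in>V. E a i}. (h m - h i) * x i = 0"
      using sum_nonneg_eq_0_iff[where A = "{i\<in>V. E a i}" and f = "\<lambda>i. (h m - h i) * x i"] fin
      by auto
    then have "(h m - h b) * x b = 0" using ab \<open>E a b\<close> by blast
    moreover have "x b > 0" using x_pos ab by blast
    ultimately show ?thesis by simp
  qed
  have "\<forall>j\<in>V. h j = h m"
    using connected_graph_propagate[OF conn m(1), of "\<lambda>j. h j = h m"] max_spreads by blast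
  then show thesis by (rule that)
qed

lemma nbcrw_stationary_unique:
  assumes G: "simple_graph V E" and conn: "connected_graph V E"
    and x_pos: "\<forall>i\<in>V. x i > 0" and s_pos: "\<forall>i\<in>V. neighbour_sum V E x i > 0"
    and st: "stationary_distribution V (nbcrw V E x) \<pi>" and "j \<in> V"
  shows "\<pi> j = x j * neighbour_sum V E x j / (\<Sum>i\<in>V. x i * neighbour_sum V E x i)"
proof -
  define s where "s = neighbour_sum V E x"
  define h where "h i = \<pi> i / (x i * s i)" for i
  have \<pi>_eq: "\<pi> i = h i * (x i * s i)" if "i \<in> V" for i
  proof -
    have "x i \<noteq> 0" "s i \<noteq> 0" using x_pos s_pos that by (auto simp: s_def)
    then show ?thesis by (simp add: h_def)
  qed
  have "\<forall>j\<in>V. h j * s j = (\<Sum>i\<in>{i\<in>V. E j i}. h i * x i)"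
  proof
    fix j assume "j \<in> V"
    have "x j * (h j * s j) = (\<Sum>i\<in>V. \<pi> i * nbcrw V E x i j)"
      using st \<open>j \<in> V\<close> \<pi>_eq by (simp add: stationary_distribution_def algebra_simps)
    also have "\<dots> = (\<Sum>i\<in>V. if E i j then x j * (h i * x i) else 0)"
      using s_pos \<pi>_eq by (intro sum.cong) (auto simp: nbcrw_def s_def neighbour_sum_def)
    also have "\<dots> = (\<Sum>i\<in>{i\<in>V. E i j}. x j * (h i * x i))"
      by (rule sum.inter_filter[OF simple_graph_finite[OF G], symmetric])
    also have "\<dots> = x j * (\<Sum>i\<in>{i\<in>V. E j i}. h i * x i)"
      by (simp add: simple_graph_neighbours_sym[OF G] sum_distrib_left)
    finally show "h j * s j = (\<Sum>i\<in>{i\<in>V. E j i}. h i * x i)"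
      using x_pos \<open>j \<in> V\<close> by fastforce
  qed
  then obtain c where c: "\<forall>i\<in>V. h i = c"
    using weighted_mean_property_imp_constant[OF G conn x_pos] unfolding s_def by blast
  have "1 = (\<Sum>i\<in>V. \<pi> i)" using st by (simp add: stationary_distribution_def)
  also have "\<dots> = c * (\<Sum>i\<in>V. x i * s i)"
    by (simp add: sum_distrib_left \<pi>_eq c)
  finally have "c = 1 / (\<Sum>i\<in>V. x i * s i)"
    by (auto simp: eq_divide_eq)
  then show ?thesis
    using \<pi>_eq[OF \<open>j \<in> V\<close>] c \<open>j \<in> V\<close> by (simp add: s_def)
qed

lemma nb_nonneg_eigenvector_nonneg:
  "simple_graph V E \<Longrightarrow> nb_nonneg_eigenvector V E \<kappa> v \<Longrightarrow> E i j \<Longrightarrow> v (i, j) \<ge> 0"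
  by (auto simp: nb_nonneg_eigenvector_def dir_edges_def dest: simple_graph_edge_in)

lemma nb_centrality_nonneg:
  "simple_graph V E \<Longrightarrow> nb_nonneg_eigenvector V E \<kappa> v \<Longrightarrow> nb_centrality V E v i \<ge> 0"
  unfolding nb_centrality_def by (rule sum_nonneg) (auto intro: nb_nonneg_eigenvector_nonneg)

lemma nb_eigenvector_edge:
  assumes G: "simple_graph V E" and ev: "nb_nonneg_eigenvector V E \<kappa> v" and "E i j"
  shows "\<kappa> * v (i, j) = nb_centrality V E v j - v (j, i)"
proof -
  have ij: "i \<in> V" "j \<in> V" using simple_graph_edge_in[OF G \<open>E i j\<close>] by auto
  have "\<kappa> * v (i, j) = (\<Sum>f\<in>dir_edges V E. nb_matrix (i, j) f * v f)"
    using ev ij \<open>E i j\<close> by (simp add: nb_nonneg_eigenvector_def dir_edges_def)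
  also have "\<dots> = (\<Sum>f\<in>{f\<in>dir_edges V E. fst f = j \<and> snd f \<noteq> i}. v f)"
    by (subst sum.inter_filter[OF finite_dir_edges[OF G]])
      (auto simp: nb_matrix_def intro!: sum.cong)
  also have "{f\<in>dir_edges V E. fst f = j \<and> snd f \<noteq> i} = Pair j ` ({l\<in>V. E j l} - {i})"
    by (auto simp: dir_edges_def ij)
  also have "(\<Sum>f\<in>Pair j ` ({l\<in>V. E j l} - {i}). v f) = (\<Sum>l\<in>{l\<in>V. E j l} - {i}. v (j, l))"
    by (subst sum.reindex) (auto simp: inj_on_def)
  also have "\<dots> = nb_centrality V E v j - v (j, i)"
    unfolding nb_centrality_def
    using simple_graph_finite[OF G] simple_graph_sym[OF G \<open>E i j\<close>] ij
    by (simp add: sum_diff1)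
  finally show ?thesis .
qed

lemma nb_incoming_sum_times_eigenvalue:
  assumes G: "simple_graph V E" and ev: "nb_nonneg_eigenvector V E \<kappa> v"
  shows "\<kappa> * (\<Sum>j\<in>{j\<in>V. E i j}. v (j, i)) = (real (degree V E i) - 1) * nb_centrality V E v i"
proof -
  have "\<kappa> * (\<Sum>j\<in>{j\<in>V. E i j}. v (j, i)) = (\<Sum>j\<in>{j\<in>V. E i j}. nb_centrality V E v i - v (i, j))"
    unfolding sum_distrib_left
    by (intro sum.cong) (auto simp: nb_eigenvector_edge[OF G ev] simple_graph_sym[OF G])
  also have "\<dots> = real (degree V E i) * nb_centrality V E v i - nb_centrality V E v i"
    by (simp add: sum_subtractf degree_def nb_centrality_def)
  finally show ?thesis by (simp add: algebra_simps)
qed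

lemma nb_centrality_times_eigenvalue:
  assumes G: "simple_graph V E" and ev: "nb_nonneg_eigenvector V E \<kappa> v"
  shows "\<kappa> * nb_centrality V E v i
    = neighbour_sum V E (nb_centrality V E v) i - (\<Sum>j\<in>{j\<in>V. E i j}. v (j, i))"
  unfolding nb_centrality_def[of V E v i] neighbour_sum_def
  by (simp add: sum_distrib_left nb_eigenvector_edge[OF G ev] sum_subtractf)

lemma nb_neighbour_sum_times_eigenvalue:
  assumes G: "simple_graph V E" and ev: "nb_nonneg_eigenvector V E \<kappa> v"
  shows "\<kappa> * neighbour_sum V E (nb_centrality V E v) i
    = (\<kappa>\<^sup>2 - 1 + real (degree V E i)) * nb_centrality V E v i"
  using arg_cong[OF nb_centrality_times_eigenvalue[OF G ev, of i], of "(*) \<kappa>"]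
    nb_incoming_sum_times_eigenvalue[OF G ev, of i]
  by (simp add: power2_eq_square algebra_simps)

lemma nb_edge_le_centrality:
  assumes G: "simple_graph V E" and ev: "nb_nonneg_eigenvector V E \<kappa> v" and "E i j"
  shows "v (i, j) \<le> nb_centrality V E v i"
  unfolding nb_centrality_def
  using simple_graph_finite[OF G] simple_graph_edge_in[OF G \<open>E i j\<close>] \<open>E i j\<close>
  by (intro member_le_sum) (auto intro: nb_nonneg_eigenvector_nonneg[OF G ev])

text \<open>If x_a = 0 then v vanishes on all edges at a, in both directions (the incoming ones by
  the incoming-sum identity), so x_b = 0 for each neighbour b by the edge equation;
  connectivity spreads this to an edge where v is nonzero.\<close>
lemma nb_centrality_pos:
  assumes G: "simple_graph V E" and conn: "connected_graph V E" and "\<kappa> \<noteq> 0"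
    and ev: "nb_nonneg_eigenvector V E \<kappa> v" and "i \<in> V"
  shows "nb_centrality V E v i > 0"
proof (rule ccontr)
  let ?x = "nb_centrality V E v"
  note v_nonneg = nb_nonneg_eigenvector_nonneg[OF G ev]
  assume "\<not> ?x i > 0"
  then have "?x i = 0" using nb_centrality_nonneg[OF G ev, of i] by simp
  have zero_spreads: "?x b = 0" if "E a b" "?x a = 0" for a b
  proof -
    have "v (a, b) = 0"
      using nb_edge_le_centrality[OF G ev \<open>E a b\<close>] v_nonneg[OF \<open>E a b\<close>] \<open>?x a = 0\<close> by simp
    moreover have "v (b, a) = 0"
    proof -
      have "\<kappa> * (\<Sum>j\<in>{j\<in>V. E a j}. v (j, a)) = 0"
        using nb_incoming_sum_times_eigenvalue[OF G ev, of a] \<open>?x a = 0\<close> by simp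
      then have "(\<Sum>j\<in>{j\<in>V. E a j}. v (j, a)) = 0" using \<open>\<kappa> \<noteq> 0\<close> by simp
      moreover have "v (b, a) \<le> (\<Sum>j\<in>{j\<in>V. E a j}. v (j, a))"
        using simple_graph_finite[OF G] simple_graph_edge_in[OF G \<open>E a b\<close>] \<open>E a b\<close>
        by (intro member_le_sum) (auto intro: v_nonneg simple_graph_sym[OF G])
      ultimately show ?thesis
        using v_nonneg[OF simple_graph_sym[OF G \<open>E a b\<close>]] by simp
    qed
    ultimately show ?thesis using nb_eigenvector_edge[OF G ev \<open>E a b\<close>] by simp
  qed
  obtain a b where ab: "E a b" "a \<in> V" "v (a, b) \<noteq> 0"
    using ev by (auto simp: nb_nonneg_eigenvector_def dir_edges_def)
  have "?x a = 0"
    by (rule connected_graph_propagate[OF conn \<open>i \<in> V\<close>, where P = "\<lambda>j. ?x j = 0"])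
      (use zero_spreads \<open>?x i = 0\<close> ab(2) in auto)
  then show False
    using nb_edge_le_centrality[OF G ev ab(1)] v_nonneg[OF ab(1)] ab(3) by linarith
qed

lemma nb_stationary_weight:
  assumes G: "simple_graph V E" and ev: "nb_nonneg_eigenvector V E \<kappa> v" and "\<kappa> \<noteq> 0"
  defines "x \<equiv> nb_centrality V E v"
  shows "((\<kappa>\<^sup>2 - 1) / \<kappa> + real (degree V E i) / \<kappa>) * (x i)\<^sup>2 = x i * neighbour_sum V E x i"
proof -
  have "((\<kappa>\<^sup>2 - 1) / \<kappa> + real (degree V E i) / \<kappa>) * (x i)\<^sup>2
      = (\<kappa>\<^sup>2 - 1 + real (degree V E i)) * x i / \<kappa> * x i"
    by (simp add: power2_eq_square add_divide_distrib[symmetric])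
  also have "\<dots> = \<kappa> * neighbour_sum V E x i / \<kappa> * x i"
    using nb_neighbour_sum_times_eigenvalue[OF G ev, of i] by (simp add: x_def)
  also have "\<dots> = x i * neighbour_sum V E x i"
    using \<open>\<kappa> \<noteq> 0\<close> by simp
  finally show ?thesis .
qed

theorem theorem2:
  fixes V :: "'a set" and E :: "'a \<Rightarrow> 'a \<Rightarrow> bool"
    and \<kappa> :: real and v :: "'a \<times> 'a \<Rightarrow> real"
  assumes "simple_graph V E" and "connected_graph V E" and "\<not> is_tree V E"
    and "nb_leading_eigenvalue V E \<kappa>" and "\<kappa> > 0"
    and "nb_nonneg_eigenvector V E \<kappa> v"
    and "\<forall>i\<in>V. (\<Sum>k\<in>{k\<in>V. E i k}. nb_centrality V E v k) \<noteq> 0"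
  shows "let x = nb_centrality V E v;
             Q = (\<Sum>i\<in>V. ((\<kappa>\<^sup>2 - 1) / \<kappa> + real (degree V E i) / \<kappa>) * (x i)\<^sup>2);
             \<pi>B = (\<lambda>i. ((\<kappa>\<^sup>2 - 1) / \<kappa> + real (degree V E i) / \<kappa>) * (x i)\<^sup>2 / Q)
         in stationary_distribution V (nbcrw V E x) \<pi>B
            \<and> (\<forall>\<pi>. stationary_distribution V (nbcrw V E x) \<pi> \<longrightarrow> (\<forall>i\<in>V. \<pi> i = \<pi>B i))"
proof -
  note G = assms(1) and conn = assms(2) and ev = assms(6)
  define x where "x = nb_centrality V E v"
  have x_pos: "\<forall>i\<in>V. x i > 0"
    using nb_centrality_pos[OF G conn _ ev] assms(5) by (simp add: x_def)
  have s_pos: "\<forall>i\<in>V. neighbour_sum V E x i > 0"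
  proof
    fix i assume "i \<in> V"
    have "neighbour_sum V E x i \<ge> 0"
      unfolding neighbour_sum_def using x_pos by (intro sum_nonneg) auto
    moreover have "neighbour_sum V E x i \<noteq> 0"
      using assms(7) \<open>i \<in> V\<close> by (simp add: neighbour_sum_def x_def)
    ultimately show "neighbour_sum V E x i > 0" by simp
  qed
  have "\<kappa> \<noteq> 0" using assms(5) by simp
  have "V \<noteq> {}" using conn by (simp add: connected_graph_def)
  then show ?thesis
    unfolding Let_def x_def[symmetric] nb_stationary_weight[OF G ev \<open>\<kappa> \<noteq> 0\<close>, folded x_def]
    using nbcrw_stationary[OF G _ x_pos s_pos] nbcrw_stationary_unique[OF G conn x_pos s_pos]
    by blast
qed

end
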